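(* Consider the facility location problem on a random shortest path metric on $n$ vertices with opening costs $0<f_1\le\dots\le f_n$ depending on $n$, with $f_n/f_1\le n^q$ for a constant $q$. Let $\kappa=\max\{i\in[n]: f_i<1/(i-1)\}$ and let $\mathsf{ALG}$ be the cost of opening the facilities with costs $f_1,\ldots,f_\kappa$. Suppose $f_1\le 1/\ln^2(n)$ as $n\to\infty$. Then for sufficiently large $n$, $$\int_{1/f_1^2}^\infty\mathbb{P}\left(\mathsf{ALG}\ge\sqrt x\right)\mathrm{d}x\le O\left(\frac1n\right).$$
   Context: Random shortest path metric: let $G=(V,E)$ be the complete undirected graph on $n$ vertices; each edge $e$ independently receives a weight $w(e)\sim\mathrm{Exp}(1)$ (exponential distribution with rate $1$), and $d(u,v)$ is the minimum total weight of a $u$-$v$ path in $G$. Facility location: vertex $i\in V=[n]$ has opening cost $f_i>0$, deterministic (independent of the edge weights). For nonempty $U\subseteq V$, $c(U)=\sum_{i\in U}f_i+\sum_{v\in V}\min_{u\in U}d(u,v)$. In the definition of $\kappa$, $1/(i-1)$ for $i=1$ is interpreted as $+\infty$. $\mathsf{ALG}=c(\{1,\ldots,\kappa\})$. Asymptotic notation refers to $n\to\infty$. *)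

theory Defs
  imports "HOL-Probability.Probability"
begin

text \<open>Complete graph on vertex set {1..n}; undirected edges are pairs (i,j) with i<j.\<close>
definition edges :: "nat \<Rightarrow> (nat \<times> nat) set" where
  "edges n = {(i, j). 1 \<le> i \<and> i < j \<and> j \<le> n}"

definition weight_space :: "nat \<Rightarrow> (nat \<times> nat \<Rightarrow> real) measure" where
  "weight_space n = PiM (edges n) (\<lambda>_. density lborel (exponential_density 1))"

definition ew :: "(nat \<times> nat \<Rightarrow> real) \<Rightarrow> nat \<Rightarrow> nat \<Rightarrow> real" where
  "ew w a b = w (min a b, max a b)"

definition path_weight :: "(nat \<times> nat \<Rightarrow> real) \<Rightarrow> nat list \<Rightarrow> real" where
  "path_weight w p = (\<Sum>(a, b) \<leftarrow> zip p (tl p). ew w a b)"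

definition spdist :: "nat \<Rightarrow> (nat \<times> nat \<Rightarrow> real) \<Rightarrow> nat \<Rightarrow> nat \<Rightarrow> real" where
  "spdist n w u v = Min {path_weight w p | p. p \<noteq> [] \<and> distinct p \<and> hd p = u \<and> last p = v
                                            \<and> set p \<subseteq> {1..n}}"

definition fl_cost :: "nat \<Rightarrow> (nat \<Rightarrow> real) \<Rightarrow> (nat \<times> nat \<Rightarrow> real) \<Rightarrow> nat set \<Rightarrow> real" where
  "fl_cost n f w U = (\<Sum>i\<in>U. f i) + (\<Sum>v\<in>{1..n}. Min ((\<lambda>u. spdist n w u v) ` U))"

text \<open>kappa = max {i in [n] : f_i < 1/(i-1)}, with 1/(1-1) read as +infinity.\<close>
definition kappa :: "nat \<Rightarrow> (nat \<Rightarrow> real) \<Rightarrow> nat" where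
  "kappa n f = Max {i \<in> {1..n}. i = 1 \<or> f i < 1 / (real i - 1)}"

definition ALG :: "nat \<Rightarrow> (nat \<Rightarrow> real) \<Rightarrow> (nat \<times> nat \<Rightarrow> real) \<Rightarrow> real" where
  "ALG n f w = fl_cost n f w {1..kappa n f}"

end

theory Submission
  imports Defs "HOL-Real_Asymp.Real_Asymp"
begin

(* Call an edge cheap if its weight is at most a = 16 beta / n. Except with probability
   2 n exp (-3 beta), every vertex set S with |S| <= n/2 has at least min (beta |S|, n/2 + 1 - |S|)
   cheap neighbours: otherwise some small T contains all cheap neighbours of S, which forces the
   |S| (n - |S| - |T|) >= |S| n / 2 independent weights between S and the rest to exceed a, and a
   union bound over S, T and the cheap edges into T leaves exp (-3 beta |S|) per set S.
   Under this expansion property the cheap balls of radius L around any two vertices have more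
   than n/2 elements once (1 + beta)^L >= n, so they meet; hence d(1, v) <= 2 L a for all v and
   ALG <= f_1 + 1 + 32 L beta. Taking beta = (s - 3) / (32 L) gives
   P(ALG >= s) <= 2 n exp (-3 beta), and for L ~ 2 ln n / ln ln n and s >= 1 / f_1 >= ln^2 n
   the integral of this tail is O(1/n). *)

lemma sum_power_div_fact_le_exp:
  fixes x :: real
  assumes "0 \<le> x" "finite I"
  shows "(\<Sum>t\<in>I. x ^ t / fact t) \<le> exp x"
proof -
  have "(\<Sum>t\<in>I. x ^ t / fact t) \<le> (\<Sum>t. x ^ t / fact t)"
    using summable_exp[of x] assms by (intro sum_le_suminf) (auto simp: field_simps)
  also have "\<dots> = exp x" by (simp add: exp_def field_simps)
  finally show ?thesis .
qed

lemma sum_power_div_fact_le: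
  fixes x k :: real
  assumes k: "0 < k" "k \<le> x" and I: "finite I" "\<And>t. t \<in> I \<Longrightarrow> real t \<le> k"
  shows "(\<Sum>t\<in>I. x ^ t / fact t) \<le> (x / k) powr k * exp k"
proof -
  have "x ^ t / fact t \<le> (x / k) powr k * (k ^ t / fact t)" if "t \<in> I" for t
  proof -
    have "(x / k) ^ t = (x / k) powr real t" using k by (simp add: powr_realpow)
    also have "\<dots> \<le> (x / k) powr k" using k I(2)[OF that] by (intro powr_mono) auto
    finally have "(x / k) ^ t * (k ^ t / fact t) \<le> (x / k) powr k * (k ^ t / fact t)"
      by (rule mult_right_mono) (use k in simp)
    then show ?thesis using k by (simp add: power_divide)
  qed
  then have "(\<Sum>t\<in>I. x ^ t / fact t) \<le> (x / k) powr k * (\<Sum>t\<in>I. k ^ t / fact t)"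
    by (simp add: sum_distrib_left sum_mono)
  also have "\<dots> \<le> (x / k) powr k * exp k"
    using sum_power_div_fact_le_exp[of k I] k I by (intro mult_left_mono) auto
  finally show ?thesis .
qed

lemma binomial_le_power_div_fact: "real (m choose t) \<le> real m ^ t / fact t"
proof -
  have "real (m choose t) * fact t \<le> real m ^ t"
    by (metis binomial_fact_pow of_nat_fact of_nat_le_iff of_nat_mult of_nat_power)
  then show ?thesis by (simp add: field_simps)
qed

lemma sum_binomial_power_le:
  fixes x y k :: real
  assumes y: "0 \<le> y" "real m * y \<le> x" and k: "0 < k" "k \<le> x"
    and I: "finite I" "\<And>t. t \<in> I \<Longrightarrow> real t \<le> k"
  shows "(\<Sum>t\<in>I. real (m choose t) * y ^ t) \<le> (x / k) powr k * exp k"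
proof -
  have "real (m choose t) * y ^ t \<le> x ^ t / fact t" for t
  proof -
    have "real (m choose t) * y ^ t \<le> real m ^ t / fact t * y ^ t"
      using y(1) by (intro mult_right_mono binomial_le_power_div_fact) auto
    also have "\<dots> = (real m * y) ^ t / fact t" by (simp add: power_mult_distrib)
    also have "\<dots> \<le> x ^ t / fact t" using y by (intro divide_right_mono power_mono) auto
    finally show ?thesis .
  qed
  then have "(\<Sum>t\<in>I. real (m choose t) * y ^ t) \<le> (\<Sum>t\<in>I. x ^ t / fact t)"
    by (rule sum_mono)
  also have "\<dots> \<le> (x / k) powr k * exp k" using k I by (rule sum_power_div_fact_le)
  finally show ?thesis .
qed

lemma sixteen_powr_le_exp:
  fixes k :: real
  assumes "0 \<le> k"
  shows "16 powr k \<le> exp (4 * k)"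
proof -
  have "ln 16 \<le> (4::real)" using ln_realpow[of 2 4] ln_2_less_1 by simp
  then have "k * ln 16 \<le> k * 4" using assms by (rule mult_left_mono)
  then show ?thesis by (simp add: powr_def mult.commute)
qed

lemma sum_subsets_by_card:
  fixes g :: "nat \<Rightarrow> real"
  assumes A: "finite A"
  shows "(\<Sum>T | T \<subseteq> A \<and> P (card T). g (card T)) = (\<Sum>t | t \<le> card A \<and> P t. real (card A choose t) * g t)"
proof -
  define F where "F t = {T. T \<subseteq> A \<and> card T = t}" for t
  have "{T. T \<subseteq> A \<and> P (card T)} = (\<Union>t\<in>{t. t \<le> card A \<and> P t}. F t)"
    using card_mono[OF A] by (auto simp: F_def)
  moreover have "finite (F t)" for t
    using A by (auto simp: F_def intro: finite_subset[of _ "Pow A"])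
  moreover have "(\<Sum>T\<in>F t. g (card T)) = real (card A choose t) * g t" for t
    using n_subsets[OF A, of t] by (simp add: F_def)
  moreover have "F s \<inter> F t = {}" if "s \<noteq> t" for s t
    using that by (auto simp: F_def)
  ultimately show ?thesis
    by (simp add: sum.UNION_disjoint)
qed

lemma sum_power_le_twice:
  fixes r :: real
  assumes "0 \<le> r" "r \<le> 1/2"
  shows "(\<Sum>s=1..m. r ^ s) \<le> 2 * r"
proof -
  have "(\<Sum>s=1..m. r ^ s) = r * (\<Sum>s<m. r ^ s)"
    by (simp add: sum_distrib_left sum.atLeast1_atMost_eq)
  also have "(\<Sum>s<m. r ^ s) = (1 - r ^ m) / (1 - r)"
    using assms by (simp add: sum_gp_strict)
  also have "\<dots> \<le> 2"
  proof -
    have "0 \<le> r ^ m" using assms by simp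
    then have "1 - r ^ m \<le> 2 - 2 * r" using assms by linarith
    then show ?thesis using assms by (simp add: pos_divide_le_eq mult.commute)
  qed
  finally show ?thesis using assms by (simp add: mult_left_mono)
qed

lemma exp_neg_le_power4:
  fixes y :: real
  assumes "0 < y"
  shows "exp (- y) \<le> 256 / y ^ 4"
proof -
  have "y / 4 \<le> exp (y / 4)" using exp_ge_add_one_self[of "y / 4"] by linarith
  then have "(y / 4) ^ 4 \<le> exp (y / 4) ^ 4"
    using assms by (intro power_mono) auto
  also have "\<dots> = exp y" by (simp flip: exp_of_nat_mult)
  finally show ?thesis using assms by (simp add: exp_minus field_simps)
qed

lemma exp_le_power_of_sqrt:
  fixes l b :: real and L :: nat
  assumes "1 < l" "2 * l / ln l \<le> L" "sqrt l \<le> b"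
  shows "exp l \<le> (1 + b) ^ L"
proof -
  have "exp l = sqrt l powr (2 * l / ln l)"
    using assms(1) by (simp add: powr_def ln_sqrt)
  also have "\<dots> \<le> sqrt l powr L" using assms(1,2) by (intro powr_mono) auto
  also have "\<dots> = sqrt l ^ L" using assms(1) by (simp add: powr_realpow)
  also have "\<dots> \<le> (1 + b) ^ L" using assms by (intro power_mono) auto
  finally show ?thesis .
qed

section \<open>Exponentially distributed edge weights\<close>

abbreviation Exp1 :: "real measure" where
  "Exp1 \<equiv> density lborel (exponential_density 1)"

lemma prob_space_Exp1: "prob_space Exp1"
  by (rule prob_space_exponential_density) simp

lemma measure_Exp1_atMost: "0 \<le> a \<Longrightarrow> measure Exp1 {..a} = 1 - exp (-a)"
  using emeasure_erlang_density[of 1 0 a] by (simp add: erlang_CDF_def measure_def)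

lemma measure_Exp1_greaterThan: "0 \<le> a \<Longrightarrow> measure Exp1 {a<..} = exp (-a)"
proof -
  interpret prob_space Exp1 by (rule prob_space_Exp1)
  assume "0 \<le> a"
  have "{a<..} = space Exp1 - {..a}" by auto
  then show ?thesis using prob_compl[of "{..a}"] measure_Exp1_atMost[OF \<open>0 \<le> a\<close>] by simp
qed

lemma finite_edges: "finite (edges n)"
  by (rule finite_subset[of _ "{1..n} \<times> {1..n}"]) (auto simp: edges_def)

lemma finite_product_prob_space_weights: "finite_product_prob_space (\<lambda>_. Exp1) (edges n)"
  by (simp add: finite_product_prob_space_def finite_product_sigma_finite_def
      product_prob_space_def product_sigma_finite_def product_prob_space_axioms_def
      finite_product_sigma_finite_axioms_def prob_space_Exp1 prob_space_imp_sigma_finite finite_edges)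

lemma prob_space_weight_space: "prob_space (weight_space n)"
  unfolding weight_space_def by (rule prob_space_PiM) (rule prob_space_Exp1)

lemma space_weight_space: "space (weight_space n) = (\<Pi>\<^sub>E e\<in>edges n. UNIV)"
  by (simp add: weight_space_def space_PiM)

definition edge :: "nat \<Rightarrow> nat \<Rightarrow> nat \<times> nat" where
  "edge u v = (min u v, max u v)"

lemma edge_commute: "edge u v = edge v u"
  by (simp add: edge_def min.commute max.commute)

lemma edge_eq_iff: "edge a b = edge c d \<longleftrightarrow> (a = c \<and> b = d) \<or> (a = d \<and> b = c)"
  by (auto simp: edge_def min_def max_def split: if_splits)

lemma edge_in_edges: "u \<in> {1..n} \<Longrightarrow> v \<in> {1..n} \<Longrightarrow> u \<noteq> v \<Longrightarrow> edge u v \<in> edges n"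
  by (auto simp: edge_def edges_def min_def max_def)

lemma ew_eq_edge: "ew w u v = w (edge u v)"
  by (simp add: ew_def edge_def)

definition edge_event :: "nat \<Rightarrow> real \<Rightarrow> (nat \<times> nat) set \<Rightarrow> (nat \<times> nat) set \<Rightarrow> (nat \<times> nat \<Rightarrow> real) set"
  where "edge_event n a C D = {w \<in> space (weight_space n). (\<forall>e\<in>C. w e \<le> a) \<and> (\<forall>e\<in>D. a < w e)}"

lemma edge_event_eq_PiE:
  assumes "C \<subseteq> edges n" "D \<subseteq> edges n" "C \<inter> D = {}"
  shows "edge_event n a C D =
    (\<Pi>\<^sub>E e\<in>edges n. if e \<in> C then {..a} else if e \<in> D then {a<..} else UNIV)"
proof (intro equalityI subsetI)
  fix w assume "w \<in> edge_event n a C D"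
  then show "w \<in> (\<Pi>\<^sub>E e\<in>edges n. if e \<in> C then {..a} else if e \<in> D then {a<..} else UNIV)"
    using assms by (auto simp: edge_event_def space_weight_space PiE_iff)
next
  fix w assume w: "w \<in> (\<Pi>\<^sub>E e\<in>edges n. if e \<in> C then {..a} else if e \<in> D then {a<..} else UNIV)"
  have "w e \<le> a" if "e \<in> C" for e
  proof -
    have "e \<in> edges n" using that assms(1) by auto
    then show ?thesis using w that by (auto simp: PiE_iff)
  qed
  moreover have "a < w e" if "e \<in> D" for e
  proof -
    have "e \<notin> C" "e \<in> edges n" using that assms(2,3) by auto
    then show ?thesis using w that by (auto simp: PiE_iff)
  qed
  ultimately show "w \<in> edge_event n a C D"
    using w by (auto simp: edge_event_def space_weight_space PiE_iff)
qed

lemma edge_event_in_sets: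
  assumes "C \<subseteq> edges n" "D \<subseteq> edges n" "C \<inter> D = {}"
  shows "edge_event n a C D \<in> sets (weight_space n)"
  unfolding edge_event_eq_PiE[OF assms] weight_space_def
  by (rule sets_PiM_I_finite) (auto simp: finite_edges)

lemma measure_edge_event:
  assumes "C \<subseteq> edges n" "D \<subseteq> edges n" "C \<inter> D = {}" "0 \<le> a"
  shows "measure (weight_space n) (edge_event n a C D) = (1 - exp (-a)) ^ card C * exp (-a) ^ card D"
proof -
  interpret finite_product_prob_space "\<lambda>_. Exp1" "edges n"
    by (rule finite_product_prob_space_weights)
  have "measure Exp1 UNIV = 1" using prob_space.prob_space[OF prob_space_Exp1] by simp
  have "measure (weight_space n) (edge_event n a C D) =
      (\<Prod>e\<in>edges n. if e \<in> C then 1 - exp (-a) else if e \<in> D then exp (-a) else 1)"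
    unfolding edge_event_eq_PiE[OF assms(1-3)] weight_space_def
    by (subst prob_times) (auto intro!: prod.cong simp: measure_Exp1_atMost measure_Exp1_greaterThan
        assms(4) \<open>measure Exp1 UNIV = 1\<close>)
  also have "\<dots> = (1 - exp (-a)) ^ card C * exp (-a) ^ card D"
  proof -
    have "edges n \<inter> C = C" "edges n \<inter> - C \<inter> D = D" using assms(1-3) by auto
    then show ?thesis by (simp add: prod.If_cases finite_edges Int_assoc)
  qed
  finally show ?thesis .
qed

section \<open>Expansion of the graph of cheap edges\<close>

text \<open>The event that the cheap neighbourhood of \<open>S\<close> is exactly \<open>T\<close>, with \<open>c\<close> selecting a cheap
  edge from \<open>S\<close> into each vertex of \<open>T\<close>.\<close>

definition nbhd_witness ::
    "nat \<Rightarrow> real \<Rightarrow> nat set \<Rightarrow> nat set \<Rightarrow> (nat \<Rightarrow> nat) \<Rightarrow> (nat \<times> nat \<Rightarrow> real) set" where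
  "nbhd_witness n a S T c =
     edge_event n a ((\<lambda>x. edge (c x) x) ` T) ((\<lambda>(u, y). edge u y) ` (S \<times> ({1..n} - S - T)))"

lemma nbhd_witness_edges:
  assumes "S \<subseteq> {1..n}" "T \<subseteq> {1..n} - S" "c \<in> T \<rightarrow> S"
  shows "(\<lambda>x. edge (c x) x) ` T \<subseteq> edges n"
    and "(\<lambda>(u, y). edge u y) ` (S \<times> ({1..n} - S - T)) \<subseteq> edges n"
    and "(\<lambda>x. edge (c x) x) ` T \<inter> (\<lambda>(u, y). edge u y) ` (S \<times> ({1..n} - S - T)) = {}"
proof -
  have "c x \<in> S" "c x \<in> {1..n}" "x \<in> {1..n}" "c x \<noteq> x" if "x \<in> T" for x
  proof -
    show "c x \<in> S" using assms(3) that by blast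
    then show "c x \<in> {1..n}" "x \<in> {1..n}" "c x \<noteq> x" using assms(1,2) that by auto
  qed
  then show "(\<lambda>x. edge (c x) x) ` T \<subseteq> edges n"
    by (intro image_subsetI edge_in_edges)
  show "(\<lambda>(u, y). edge u y) ` (S \<times> ({1..n} - S - T)) \<subseteq> edges n"
    using assms(1) by (auto simp: subset_iff intro!: edge_in_edges)
  show "(\<lambda>x. edge (c x) x) ` T \<inter> (\<lambda>(u, y). edge u y) ` (S \<times> ({1..n} - S - T)) = {}"
    using \<open>\<And>x. x \<in> T \<Longrightarrow> c x \<in> S\<close> assms(2) by (auto simp: edge_eq_iff)
qed

lemma nbhd_witness_in_sets:
  assumes "S \<subseteq> {1..n}" "T \<subseteq> {1..n} - S" "c \<in> T \<rightarrow> S"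
  shows "nbhd_witness n a S T c \<in> sets (weight_space n)"
  unfolding nbhd_witness_def using nbhd_witness_edges[OF assms] by (rule edge_event_in_sets)

lemma measure_nbhd_witness_le:
  assumes S: "S \<subseteq> {1..n}" and T: "T \<subseteq> {1..n} - S" and c: "c \<in> T \<rightarrow> S" and a: "0 \<le> a"
  shows "measure (weight_space n) (nbhd_witness n a S T c)
           \<le> a ^ card T * exp (-a) ^ (card S * card ({1..n} - S - T))"
proof -
  let ?F = "{1..n} - S - T"
  have "inj_on (\<lambda>x. edge (c x) x) T" using c T by (auto simp: inj_on_def edge_eq_iff)
  then have card_C: "card ((\<lambda>x. edge (c x) x) ` T) = card T" by (rule card_image)
  have "inj_on (\<lambda>(u, y). edge u y) (S \<times> ?F)" using S T by (auto simp: inj_on_def edge_eq_iff)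
  then have card_D: "card ((\<lambda>(u, y). edge u y) ` (S \<times> ?F)) = card S * card ?F"
    by (simp add: card_image card_cartesian_product)
  have "1 - exp (-a) \<le> a" using exp_ge_add_one_self[of "-a"] by simp
  then have "(1 - exp (-a)) ^ card T \<le> a ^ card T" using a by (intro power_mono) auto
  then show ?thesis
    unfolding nbhd_witness_def measure_edge_event[OF nbhd_witness_edges[OF S T c] a] card_C card_D
    by (intro mult_right_mono) auto
qed

definition small_sets :: "nat \<Rightarrow> nat set set" where
  "small_sets n = {S. S \<subseteq> {1..n} \<and> 0 < card S \<and> card S \<le> n div 2}"

definition deficient_sets :: "nat \<Rightarrow> real \<Rightarrow> nat set \<Rightarrow> nat set set" where
  "deficient_sets n \<beta> S = {T. T \<subseteq> {1..n} - S \<and> real (card T) < \<beta> * card S \<and> card S + card T \<le> n div 2}"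

definition expansion_failure :: "nat \<Rightarrow> real \<Rightarrow> real \<Rightarrow> (nat \<times> nat \<Rightarrow> real) set" where
  "expansion_failure n a \<beta> =
     (\<Union>S\<in>small_sets n. \<Union>T\<in>deficient_sets n \<beta> S. \<Union>c\<in>T \<rightarrow>\<^sub>E S. nbhd_witness n a S T c)"

definition cheap_nbhd :: "nat \<Rightarrow> real \<Rightarrow> (nat \<times> nat \<Rightarrow> real) \<Rightarrow> nat set \<Rightarrow> nat set" where
  "cheap_nbhd n a w S = {x \<in> {1..n} - S. \<exists>u\<in>S. w (edge u x) \<le> a}"

definition expanding :: "nat \<Rightarrow> real \<Rightarrow> real \<Rightarrow> (nat \<times> nat \<Rightarrow> real) \<Rightarrow> bool" where
  "expanding n a \<beta> w \<longleftrightarrow>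
     (\<forall>S\<in>small_sets n. min (\<beta> * card S) (real (n div 2 + 1 - card S)) \<le> card (cheap_nbhd n a w S))"

lemma finite_small_sets: "finite (small_sets n)"
  by (rule finite_subset[of _ "Pow {1..n}"]) (auto simp: small_sets_def)

lemma finite_deficient_sets: "finite (deficient_sets n \<beta> S)"
  by (rule finite_subset[of _ "Pow {1..n}"]) (auto simp: deficient_sets_def)

lemma expansion_failure_if_not_expanding:
  assumes w: "w \<in> space (weight_space n)" and "\<not> expanding n a \<beta> w"
  shows "w \<in> expansion_failure n a \<beta>"
proof -
  obtain S where S: "S \<in> small_sets n"
    and few: "card (cheap_nbhd n a w S) < min (\<beta> * card S) (real (n div 2 + 1 - card S))"
    using assms(2) unfolding expanding_def by (auto simp: not_le)
  define T where "T = cheap_nbhd n a w S"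
  have T: "T \<in> deficient_sets n \<beta> S"
    using few S unfolding deficient_sets_def small_sets_def T_def by (auto simp: cheap_nbhd_def)
  have "\<forall>x\<in>T. \<exists>u\<in>S. w (edge u x) \<le> a" by (auto simp: T_def cheap_nbhd_def)
  then obtain c where c: "c \<in> T \<rightarrow>\<^sub>E S" and cheap: "\<forall>x\<in>T. w (edge (c x) x) \<le> a"
    by (metis (no_types, lifting) restrict_PiE_iff restrict_apply')
  have "w \<in> nbhd_witness n a S T c"
    using w cheap by (auto simp: nbhd_witness_def edge_event_def T_def cheap_nbhd_def not_less)
  then show ?thesis unfolding expansion_failure_def using S T c by blast
qed

lemma nbhd_witnesses_in_sets:
  assumes "S \<subseteq> {1..n}" "T \<subseteq> {1..n} - S"
  shows "(\<Union>c\<in>T \<rightarrow>\<^sub>E S. nbhd_witness n a S T c) \<in> sets (weight_space n)"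
  using assms by (intro sets.finite_UN finite_PiE nbhd_witness_in_sets) (auto intro: finite_subset)

lemma expansion_failure_in_sets: "expansion_failure n a \<beta> \<in> sets (weight_space n)"
  unfolding expansion_failure_def
  by (intro sets.finite_UN finite_small_sets finite_deficient_sets nbhd_witnesses_in_sets)
    (auto simp: small_sets_def deficient_sets_def)

lemma measure_nbhd_witnesses_le:
  fixes a :: real
  assumes S: "S \<subseteq> {1..n}" and T: "T \<subseteq> {1..n} - S" and st: "card S + card T \<le> n div 2"
    and a: "0 \<le> a"
  shows "measure (weight_space n) (\<Union>c\<in>T \<rightarrow>\<^sub>E S. nbhd_witness n a S T c)
           \<le> (card S * a) ^ card T * exp (- a * card S * n / 2)"
proof -
  have fin: "finite S" "finite T" using S T by (auto intro: finite_subset)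
  have "card ({1..n} - S - T) = n - card S - card T"
    using S T fin by (simp add: card_Diff_subset Diff_subset_conv)
  then have "real n / 2 \<le> card ({1..n} - S - T)" using st by linarith
  then have "a * card S * (n / 2) \<le> a * card S * card ({1..n} - S - T)"
    using a by (intro mult_left_mono) auto
  then have "exp (-a) ^ (card S * card ({1..n} - S - T)) \<le> exp (- a * card S * n / 2)"
    by (simp add: mult_ac flip: exp_of_nat_mult)
  then have witness_le: "a ^ card T * exp (-a) ^ (card S * card ({1..n} - S - T))
      \<le> a ^ card T * exp (- a * card S * n / 2)"
    using a by (intro mult_left_mono) auto
  have "measure (weight_space n) (\<Union>c\<in>T \<rightarrow>\<^sub>E S. nbhd_witness n a S T c)
      \<le> (\<Sum>c\<in>T \<rightarrow>\<^sub>E S. measure (weight_space n) (nbhd_witness n a S T c))"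
    using S T fin by (intro measure_UNION_le finite_PiE nbhd_witness_in_sets) auto
  also have "\<dots> \<le> (\<Sum>c\<in>T \<rightarrow>\<^sub>E S. a ^ card T * exp (- a * card S * n / 2))"
    using S T a by (intro sum_mono order_trans[OF measure_nbhd_witness_le witness_le]) auto
  also have "\<dots> = (card S * a) ^ card T * exp (- a * card S * n / 2)"
    using fin by (simp add: card_funcsetE power_mult_distrib)
  finally show ?thesis .
qed

lemma measure_deficient_nbhds_le:
  assumes S: "S \<in> small_sets n" and \<beta>: "0 < \<beta>"
  shows "measure (weight_space n)
      (\<Union>T\<in>deficient_sets n \<beta> S. \<Union>c\<in>T \<rightarrow>\<^sub>E S. nbhd_witness n (16 * \<beta> / n) S T c)
    \<le> exp (-3 * \<beta>) ^ card S"
proof -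
  let ?s = "card S" and ?a = "16 * \<beta> / n" and ?m = "card ({1..n} - S)"
  have S1: "S \<subseteq> {1..n}" and s: "0 < ?s" "?s \<le> n div 2" using S by (auto simp: small_sets_def)
  then have n: "0 < n" by linarith
  have a: "0 \<le> ?a" and sa: "0 \<le> ?s * ?a" using \<beta> by simp_all
  have na: "n * (?s * ?a) = 16 * \<beta> * ?s" and exp8: "exp (- ?a * ?s * n / 2) = exp (-8 * \<beta> * ?s)"
    using n by simp_all
  have "measure (weight_space n)
      (\<Union>T\<in>deficient_sets n \<beta> S. \<Union>c\<in>T \<rightarrow>\<^sub>E S. nbhd_witness n ?a S T c)
    \<le> (\<Sum>T\<in>deficient_sets n \<beta> S. measure (weight_space n) (\<Union>c\<in>T \<rightarrow>\<^sub>E S. nbhd_witness n ?a S T c))"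
    using S1 by (intro measure_UNION_le finite_deficient_sets nbhd_witnesses_in_sets)
      (auto simp: deficient_sets_def)
  also have "\<dots> \<le> (\<Sum>T\<in>deficient_sets n \<beta> S. (?s * ?a) ^ card T * exp (-8 * \<beta> * ?s))"
  proof (rule sum_mono)
    fix T assume "T \<in> deficient_sets n \<beta> S"
    then have "T \<subseteq> {1..n} - S" "card S + card T \<le> n div 2" by (auto simp: deficient_sets_def)
    from measure_nbhd_witnesses_le[OF S1 this a] show "measure (weight_space n)
        (\<Union>c\<in>T \<rightarrow>\<^sub>E S. nbhd_witness n ?a S T c) \<le> (?s * ?a) ^ card T * exp (-8 * \<beta> * ?s)"
      by (simp only: exp8)
  qed
  also have "\<dots> = (\<Sum>t | t \<le> ?m \<and> real t < \<beta> * ?s \<and> ?s + t \<le> n div 2.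
      real (?m choose t) * (?s * ?a) ^ t) * exp (-8 * \<beta> * ?s)"
  proof -
    have "(\<Sum>T\<in>deficient_sets n \<beta> S. (?s * ?a) ^ card T) = (\<Sum>t | t \<le> ?m \<and> real t < \<beta> * ?s \<and> ?s + t \<le> n div 2.
        real (?m choose t) * (?s * ?a) ^ t)"
      unfolding deficient_sets_def by (rule sum_subsets_by_card) simp
    then show ?thesis by (simp only: sum_distrib_right[symmetric])
  qed
  also have "\<dots> \<le> (16 * \<beta> * ?s / (\<beta> * ?s)) powr (\<beta> * ?s) * exp (\<beta> * ?s) * exp (-8 * \<beta> * ?s)"
  proof (intro mult_right_mono sum_binomial_power_le)
    have "?m \<le> n" using card_mono[of "{1..n}" "{1..n} - S"] by simp
    then show "real ?m * (?s * ?a) \<le> 16 * \<beta> * ?s"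
      using sa na by (metis mult_right_mono of_nat_le_iff)
  qed (use \<beta> s sa in auto)
  also have "16 * \<beta> * ?s / (\<beta> * ?s) = 16" using \<beta> s by simp
  also have "16 powr (\<beta> * ?s) * exp (\<beta> * ?s) * exp (-8 * \<beta> * ?s)
      \<le> exp (4 * (\<beta> * ?s)) * exp (\<beta> * ?s) * exp (-8 * \<beta> * ?s)"
    using \<beta> by (intro mult_right_mono sixteen_powr_le_exp) auto
  also have "\<dots> = exp (-3 * \<beta>) ^ ?s"
    by (simp add: algebra_simps flip: exp_add exp_of_nat_mult)
  finally show ?thesis .
qed

lemma measure_expansion_failure_le:
  assumes \<beta>: "0 < \<beta>" and r: "real n * exp (-3 * \<beta>) \<le> 1/2"
  shows "measure (weight_space n) (expansion_failure n (16 * \<beta> / n) \<beta>) \<le> 2 * real n * exp (-3 * \<beta>)"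
proof -
  let ?r = "exp (-3 * \<beta>)"
  have "measure (weight_space n) (expansion_failure n (16 * \<beta> / n) \<beta>)
      \<le> (\<Sum>S\<in>small_sets n. measure (weight_space n)
            (\<Union>T\<in>deficient_sets n \<beta> S. \<Union>c\<in>T \<rightarrow>\<^sub>E S. nbhd_witness n (16 * \<beta> / n) S T c))"
    unfolding expansion_failure_def
    by (intro measure_UNION_le finite_small_sets sets.finite_UN finite_deficient_sets
        nbhd_witnesses_in_sets) (auto simp: small_sets_def deficient_sets_def)
  also have "\<dots> \<le> (\<Sum>S\<in>small_sets n. ?r ^ card S)"
    using \<beta> by (intro sum_mono measure_deficient_nbhds_le)
  also have "\<dots> = (\<Sum>s | s \<le> card {1..n} \<and> 0 < s \<and> s \<le> n div 2. real (card {1..n} choose s) * ?r ^ s)"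
    unfolding small_sets_def by (rule sum_subsets_by_card) simp
  also have "\<dots> \<le> (\<Sum>s | s \<le> card {1..n} \<and> 0 < s \<and> s \<le> n div 2. (n * ?r) ^ s)"
    by (intro sum_mono) (simp add: binomial_le_pow mult_right_mono power_mult_distrib flip: of_nat_power)
  also have "\<dots> \<le> (\<Sum>s=1..n. (n * ?r) ^ s)"
    by (intro sum_mono2) auto
  also have "\<dots> \<le> 2 * n * ?r"
    using sum_power_le_twice[of "n * ?r" n] r by simp
  finally show ?thesis by simp
qed

section \<open>Cheap walks and cheap balls\<close>

fun cheap_walk :: "(nat \<times> nat \<Rightarrow> real) \<Rightarrow> real \<Rightarrow> nat list \<Rightarrow> bool" where
  "cheap_walk w a (x # y # p) \<longleftrightarrow> w (edge x y) \<le> a \<and> cheap_walk w a (y # p)"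
| "cheap_walk w a _ \<longleftrightarrow> True"

lemma cheap_walk_append_iff:
  "cheap_walk w a (p @ y # q) \<longleftrightarrow> cheap_walk w a (p @ [y]) \<and> cheap_walk w a (y # q)"
proof (induction p)
  case (Cons x p)
  then show ?case by (cases p) auto
qed simp

lemma cheap_walk_rev: "cheap_walk w a (rev p) \<longleftrightarrow> cheap_walk w a p"
proof (induction w a p rule: cheap_walk.induct)
  case (1 w a x y p)
  have "cheap_walk w a (rev (x # y # p)) \<longleftrightarrow> cheap_walk w a (rev p @ [y]) \<and> cheap_walk w a [y, x]"
    using cheap_walk_append_iff[of w a "rev p" y "[x]"] by simp
  with 1 show ?case by (auto simp: edge_commute)
qed auto

lemma cheap_walk_join:
  assumes "cheap_walk w a p" "cheap_walk w a q" "p \<noteq> []" "q \<noteq> []" "last p = hd q"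
  shows "cheap_walk w a (p @ tl q)"
proof -
  have "p = butlast p @ [hd q]" "q = hd q # tl q"
    using assms(3-5) by (metis append_butlast_last_id, simp)
  then have "p @ tl q = butlast p @ hd q # tl q" by (metis append.assoc append_Cons append_Nil)
  then show ?thesis
    using assms(1,2) \<open>p = butlast p @ [hd q]\<close> \<open>q = hd q # tl q\<close>
      cheap_walk_append_iff[of w a "butlast p" "hd q" "tl q"] by metis
qed

lemma cheap_walk_distinct:
  assumes "cheap_walk w a p" "p \<noteq> []"
  shows "\<exists>q. cheap_walk w a q \<and> q \<noteq> [] \<and> hd q = hd p \<and> last q = last p \<and> distinct q
      \<and> set q \<subseteq> set p \<and> length q \<le> length p"
  using assms
proof (induction "length p" arbitrary: p rule: less_induct)
  case less
  show ?case
  proof (cases "distinct p")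
    case False
    then obtain xs ys zs y where p: "p = xs @ [y] @ ys @ [y] @ zs"
      using not_distinct_decomp by blast
    define p' where "p' = xs @ y # zs"
    have "cheap_walk w a p'"
      using less.prems(1) unfolding p p'_def
      by (metis append_Cons append_Nil cheap_walk_append_iff)
    moreover have "length p' < length p" "p' \<noteq> []" "hd p' = hd p" "last p' = last p" "set p' \<subseteq> set p"
      unfolding p p'_def by (cases xs; cases zs rule: rev_cases; auto)+
    ultimately show ?thesis
      using less.hyps by (metis dual_order.trans less_imp_le_nat)
  qed (use less.prems in blast)
qed

lemma path_weight_le_cheap_walk:
  fixes a :: real
  shows "cheap_walk w a p \<Longrightarrow> path_weight w p \<le> (length p - 1) * a"
proof (induction w a p rule: cheap_walk.induct)
  case (1 w a x y p)
  then have "path_weight w (x # y # p) \<le> a + (length (y # p) - 1) * a"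
    by (simp add: path_weight_def ew_eq_edge)
  then show ?case by (simp add: algebra_simps)
qed (simp_all add: path_weight_def)

lemma spdist_le_path_weight:
  assumes "p \<noteq> []" "distinct p" "set p \<subseteq> {1..n}"
  shows "spdist n w (hd p) (last p) \<le> path_weight w p"
proof -
  let ?P = "{q. q \<noteq> [] \<and> distinct q \<and> hd q = hd p \<and> last q = last p \<and> set q \<subseteq> {1..n}}"
  have "finite ?P"
    by (rule finite_subset[OF _ finite_subset_distinct[of "{1..n}"]]) auto
  then show ?thesis
    unfolding spdist_def using assms
    by (intro Min_le) (auto simp: setcompr_eq_image)
qed

lemma spdist_le_cheap_walk:
  fixes a :: real
  assumes "cheap_walk w a p" "p \<noteq> []" "set p \<subseteq> {1..n}" "0 \<le> a"
  shows "spdist n w (hd p) (last p) \<le> (length p - 1) * a"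
proof -
  obtain q where q: "cheap_walk w a q" "q \<noteq> []" "hd q = hd p" "last q = last p" "distinct q"
      "set q \<subseteq> set p" "length q \<le> length p"
    using cheap_walk_distinct[OF assms(1,2)] by blast
  have "spdist n w (hd p) (last p) \<le> path_weight w q"
    using spdist_le_path_weight[of q n w] q assms(3) by auto
  also have "\<dots> \<le> (length q - 1) * a" using q(1) by (rule path_weight_le_cheap_walk)
  also have "\<dots> \<le> (length p - 1) * a" using q(7) assms(4) by (intro mult_right_mono) auto
  finally show ?thesis .
qed

fun cheap_ball :: "nat \<Rightarrow> real \<Rightarrow> (nat \<times> nat \<Rightarrow> real) \<Rightarrow> nat \<Rightarrow> nat \<Rightarrow> nat set" where
  "cheap_ball n a w u 0 = {u}"
| "cheap_ball n a w u (Suc j) = cheap_ball n a w u j \<union> cheap_nbhd n a w (cheap_ball n a w u j)"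

lemma cheap_ball_subset: "u \<in> {1..n} \<Longrightarrow> cheap_ball n a w u j \<subseteq> {1..n}"
  by (induction j) (auto simp: cheap_nbhd_def)

lemma center_in_cheap_ball: "u \<in> cheap_ball n a w u j"
  by (induction j) auto

lemma cheap_walk_to_cheap_ball:
  assumes "u \<in> {1..n}" "x \<in> cheap_ball n a w u j"
  shows "\<exists>p. cheap_walk w a p \<and> p \<noteq> [] \<and> hd p = u \<and> last p = x \<and> length p \<le> Suc j \<and> set p \<subseteq> {1..n}"
  using assms(2)
proof (induction j arbitrary: x)
  case 0
  then show ?case using assms(1) by (intro exI[of _ "[u]"]) auto
next
  case (Suc j)
  show ?case
  proof (cases "x \<in> cheap_ball n a w u j")
    case False
    then obtain y where y: "y \<in> cheap_ball n a w u j" "w (edge y x) \<le> a" "x \<in> {1..n}"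
      using Suc.prems by (auto simp: cheap_nbhd_def)
    obtain p where p: "cheap_walk w a p" "p \<noteq> []" "hd p = u" "last p = y" "length p \<le> Suc j"
        "set p \<subseteq> {1..n}"
      using Suc.IH[OF y(1)] by blast
    have "cheap_walk w a (p @ [x])"
      using cheap_walk_join[OF p(1), of "[y, x]"] p(2,4) y(2) by simp
    then show ?thesis using p y(3) by (intro exI[of _ "p @ [x]"]) auto
  qed (use Suc.IH in fastforce)
qed

lemma card_cheap_ball_ge:
  fixes \<beta> :: real
  assumes "expanding n a \<beta> w" "u \<in> {1..n}" "0 \<le> \<beta>"
  shows "min ((1 + \<beta>) ^ j) (n div 2 + 1) \<le> card (cheap_ball n a w u j)"
proof (induction j)
  case (Suc j)
  let ?B = "cheap_ball n a w u j"
  have "finite ?B" using cheap_ball_subset[OF assms(2)] by (rule finite_subset) simp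
  then have card_Suc: "card (cheap_ball n a w u (Suc j)) = card ?B + card (cheap_nbhd n a w ?B)"
    unfolding cheap_ball.simps by (rule card_Un_disjoint) (auto simp: cheap_nbhd_def)
  show ?case
  proof (cases "card ?B \<le> n div 2")
    case True
    have "?B \<noteq> {}" using center_in_cheap_ball[of u n a w j] by blast
    then have "?B \<in> small_sets n"
      using True cheap_ball_subset[OF assms(2)] \<open>finite ?B\<close> by (auto simp: small_sets_def card_gt_0_iff)
    then have nbhd: "min (\<beta> * card ?B) (n div 2 + 1 - card ?B) \<le> card (cheap_nbhd n a w ?B)"
      using assms(1) by (auto simp: expanding_def)
    have "(1 + \<beta>) ^ j \<le> card ?B" using Suc.IH True by linarith
    then have "(1 + \<beta>) ^ Suc j \<le> card ?B + \<beta> * card ?B"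
      using mult_left_mono[of "(1 + \<beta>) ^ j" "card ?B" "1 + \<beta>"] assms(3) by (simp add: algebra_simps)
    then show ?thesis using nbhd True card_Suc by simp
  qed (use card_Suc in simp)
qed simp

lemma cheap_balls_intersect:
  fixes \<beta> :: real
  assumes "expanding n a \<beta> w" "0 \<le> \<beta>" "n \<le> (1 + \<beta>) ^ L" "u \<in> {1..n}" "v \<in> {1..n}"
  shows "cheap_ball n a w u L \<inter> cheap_ball n a w v L \<noteq> {}"
proof
  assume disjoint: "cheap_ball n a w u L \<inter> cheap_ball n a w v L = {}"
  have "n div 2 + 1 \<le> n" using assms(4) by auto
  then have "real (n div 2 + 1) \<le> (1 + \<beta>) ^ L" using assms(3) by (meson of_nat_le_iff order_trans)
  then have "n div 2 + 1 \<le> card (cheap_ball n a w x L)" if "x \<in> {1..n}" for x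
    using card_cheap_ball_ge[OF assms(1) that assms(2), of L] by (simp add: min_def split: if_splits)
  then have "2 * (n div 2 + 1) \<le> card (cheap_ball n a w u L \<union> cheap_ball n a w v L)"
    using disjoint assms(4,5) card_Un_disjoint[of "cheap_ball n a w u L" "cheap_ball n a w v L"]
      cheap_ball_subset[OF assms(4)] cheap_ball_subset[OF assms(5)]
    by (metis finite_atLeastAtMost finite_subset mult_2 add_mono)
  moreover have "card (cheap_ball n a w u L \<union> cheap_ball n a w v L) \<le> n"
    using card_mono[of "{1..n}"] cheap_ball_subset[OF assms(4)] cheap_ball_subset[OF assms(5)] by force
  moreover have "n < 2 * (n div 2 + 1)" by presburger
  ultimately show False by linarith
qed

lemma spdist_le_if_expanding:
  fixes a \<beta> :: real
  assumes "expanding n a \<beta> w" "0 \<le> a" "0 \<le> \<beta>" "n \<le> (1 + \<beta>) ^ L" "u \<in> {1..n}" "v \<in> {1..n}"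
  shows "spdist n w u v \<le> 2 * L * a"
proof -
  obtain z where z: "z \<in> cheap_ball n a w u L" "z \<in> cheap_ball n a w v L"
    using cheap_balls_intersect[OF assms(1,3-6)] by blast
  obtain p where p: "cheap_walk w a p" "p \<noteq> []" "hd p = u" "last p = z" "length p \<le> Suc L"
      "set p \<subseteq> {1..n}"
    using cheap_walk_to_cheap_ball[OF assms(5) z(1)] by blast
  obtain q where q: "cheap_walk w a q" "q \<noteq> []" "hd q = v" "last q = z" "length q \<le> Suc L"
      "set q \<subseteq> {1..n}"
    using cheap_walk_to_cheap_ball[OF assms(6) z(2)] by blast
  obtain ys where ys: "rev q = z # ys"
    using q(2,4) by (metis hd_rev list.collapse rev_is_Nil_conv)
  let ?r = "p @ ys"
  have "cheap_walk w a (z # ys)" using q(1) ys cheap_walk_rev[of w a q] by metis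
  then have "cheap_walk w a ?r" using cheap_walk_join[OF p(1) _ p(2), of "z # ys"] p(4) by simp
  moreover have "last ?r = v"
    using ys p(4) q(3) last_rev[of q] q(2) by (cases ys) auto
  moreover have "hd ?r = u" "set ?r \<subseteq> {1..n}" "length ?r - 1 \<le> 2 * L"
    using p q arg_cong[OF ys, of set] arg_cong[OF ys, of length] by auto
  ultimately have "spdist n w u v \<le> (length ?r - 1) * a"
    using spdist_le_cheap_walk[of w a ?r n] p(2) assms(2) by simp
  also have "\<dots> \<le> 2 * real L * a"
    using \<open>length ?r - 1 \<le> 2 * L\<close> assms(2) by (intro mult_right_mono) linarith+
  finally show ?thesis .
qed

section \<open>The tail of ALG\<close>

lemma kappa_mem:
  assumes "1 \<le> n"
  shows "kappa n g \<in> {i \<in> {1..n}. i = 1 \<or> g i < 1 / (real i - 1)}"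
  unfolding kappa_def using assms by (intro Max_in) auto

lemma sum_opening_costs_kappa_le:
  assumes "1 \<le> n" and mono: "\<And>i j. 1 \<le> i \<Longrightarrow> i \<le> j \<Longrightarrow> j \<le> n \<Longrightarrow> g i \<le> g j"
  shows "(\<Sum>i=1..kappa n g. g i) \<le> g 1 + 1"
proof (cases "kappa n g = 1")
  case False
  let ?k = "kappa n g"
  have k: "2 \<le> ?k" "?k \<le> n" "g ?k < 1 / (real ?k - 1)"
    using kappa_mem[OF assms(1), of g] False by auto
  have "(\<Sum>i=1..?k. g i) = g 1 + (\<Sum>i=2..?k. g i)"
    using k(1) by (simp add: sum.atLeast_Suc_atMost numeral_2_eq_2)
  also have "(\<Sum>i=2..?k. g i) \<le> (\<Sum>i=2..?k. g ?k)"
    using k(2) by (intro sum_mono mono) auto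
  also have "\<dots> = (real ?k - 1) * g ?k"
    using k(1) by (simp add: of_nat_diff)
  also have "\<dots> < 1"
    using k by (simp add: field_simps)
  finally show ?thesis by simp
qed simp

lemma ALG_le_spdist_sum:
  assumes "1 \<le> n" and "\<And>i j. 1 \<le> i \<Longrightarrow> i \<le> j \<Longrightarrow> j \<le> n \<Longrightarrow> g i \<le> g j"
  shows "ALG n g w \<le> g 1 + 1 + (\<Sum>v=1..n. spdist n w 1 v)"
proof -
  have "1 \<le> kappa n g" using kappa_mem[OF assms(1), of g] by simp
  then have "Min ((\<lambda>u. spdist n w u v) ` {1..kappa n g}) \<le> spdist n w 1 v" for v
    by (intro Min_le) auto
  then have "(\<Sum>v=1..n. Min ((\<lambda>u. spdist n w u v) ` {1..kappa n g})) \<le> (\<Sum>v=1..n. spdist n w 1 v)"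
    by (rule sum_mono)
  moreover have "(\<Sum>i=1..kappa n g. g i) \<le> g 1 + 1"
    using assms by (rule sum_opening_costs_kappa_le)
  ultimately show ?thesis
    unfolding ALG_def fl_cost_def by linarith
qed

lemma emeasure_ALG_ge_le:
  fixes g :: "nat \<Rightarrow> real" and \<beta> s :: real
  assumes n: "1 \<le> n" and mono: "\<And>i j. 1 \<le> i \<Longrightarrow> i \<le> j \<Longrightarrow> j \<le> n \<Longrightarrow> g i \<le> g j"
    and \<beta>: "0 < \<beta>" "real n * exp (-3 * \<beta>) \<le> 1/2" "n \<le> (1 + \<beta>) ^ L"
    and s: "g 1 + 1 + 32 * real L * \<beta> < s"
  shows "emeasure (weight_space n) {w \<in> space (weight_space n). s \<le> ALG n g w}
           \<le> ennreal (2 * real n * exp (-3 * \<beta>))"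
proof -
  let ?a = "16 * \<beta> / n"
  have "{w \<in> space (weight_space n). s \<le> ALG n g w} \<subseteq> expansion_failure n ?a \<beta>"
  proof (intro subsetI expansion_failure_if_not_expanding notI; elim CollectE conjE)
    fix w assume "w \<in> space (weight_space n)" "s \<le> ALG n g w" "expanding n ?a \<beta> w"
    have "ALG n g w \<le> g 1 + 1 + (\<Sum>v=1..n. spdist n w 1 v)"
      using n mono by (rule ALG_le_spdist_sum)
    also have "(\<Sum>v=1..n. spdist n w 1 v) \<le> (\<Sum>v=1..n. 2 * real L * ?a)"
      using \<open>expanding n ?a \<beta> w\<close> n \<beta> by (intro sum_mono spdist_le_if_expanding) auto
    also have "\<dots> = 32 * real L * \<beta>" using n by simp
    finally show False using s \<open>s \<le> ALG n g w\<close> by linarith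
  qed
  then have "emeasure (weight_space n) {w \<in> space (weight_space n). s \<le> ALG n g w}
      \<le> emeasure (weight_space n) (expansion_failure n ?a \<beta>)"
    by (intro emeasure_mono expansion_failure_in_sets)
  also have "\<dots> = measure (weight_space n) (expansion_failure n ?a \<beta>)"
    using prob_space_weight_space[of n] by (simp add: prob_space_def finite_measure.emeasure_eq_measure)
  also have "\<dots> \<le> ennreal (2 * real n * exp (-3 * \<beta>))"
    using measure_expansion_failure_le[OF \<beta>(1,2)] by (simp add: ennreal_leI)
  finally show ?thesis .
qed

text \<open>For \<open>\<beta> = (sqrt x - 3) / (32 L)\<close> the tail bound \<open>2 n exp (-3 \<beta>)\<close> decays like
  \<open>exp (- 3 sqrt x / (32 L))\<close>; half of this decay pays for the integrable factor \<open>1 / x\<^sup>2\<close>.\<close>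

lemma exp_tail_le_inverse_square:
  fixes L n :: nat and u x :: real
  assumes L: "1 \<le> L" and u: "0 < u" "u \<le> sqrt x"
  shows "2 * real n * exp (-3 * ((sqrt x - 3) / (32 * real L)))
           \<le> 1536 * real n * (64 * real L / 3) ^ 4 * exp (- 3 * u / (64 * real L)) / x ^ 2"
proof -
  have x: "0 < sqrt x" using u by linarith
  define y where "y = 3 * sqrt x / (64 * real L)"
  have y: "0 < y" using x L by (simp add: y_def)
  have split: "-3 * ((sqrt x - 3) / (32 * real L)) = 9 / (32 * real L) + - y + - y"
    using L by (simp add: y_def field_simps)
  have "exp (9 / (32 * real L)) \<le> exp 1" using L by simp
  also have "exp 1 \<le> (3::real)" by (rule exp_le)
  finally have "exp (9 / (32 * real L)) \<le> 3" .
  moreover have "exp (- y) \<le> exp (- 3 * u / (64 * real L))"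
    using u by (simp add: y_def divide_right_mono)
  moreover have "exp (- y) \<le> 256 / y ^ 4"
    using y by (rule exp_neg_le_power4)
  moreover have "y ^ 4 = x ^ 2 / (64 * real L / 3) ^ 4"
  proof -
    have "sqrt x ^ 4 = (sqrt x ^ 2) ^ 2" by (simp flip: power_mult)
    also have "\<dots> = x ^ 2" using x by simp
    finally show ?thesis by (simp add: y_def power_divide power_mult_distrib)
  qed
  ultimately have "exp (-3 * ((sqrt x - 3) / (32 * real L)))
      \<le> 3 * exp (- 3 * u / (64 * real L)) * (256 * (64 * real L / 3) ^ 4 / x ^ 2)"
    unfolding split exp_add by (intro mult_mono) auto
  then have "2 * real n * exp (-3 * ((sqrt x - 3) / (32 * real L)))
      \<le> 2 * real n * (3 * exp (- 3 * u / (64 * real L)) * (256 * (64 * real L / 3) ^ 4 / x ^ 2))"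
    by (intro mult_left_mono) auto
  also have "\<dots> = 1536 * real n * (64 * real L / 3) ^ 4 * exp (- 3 * u / (64 * real L)) / x ^ 2"
    by (simp add: field_simps)
  finally show ?thesis .
qed

lemma emeasure_ALG_ge_sqrt_le:
  fixes g :: "nat \<Rightarrow> real" and u x :: real and L :: nat
  defines "\<beta> \<equiv> (u - 3) / (32 * real L)"
  assumes n: "1 \<le> n" and mono: "\<And>i j. 1 \<le> i \<Longrightarrow> i \<le> j \<Longrightarrow> j \<le> n \<Longrightarrow> g i \<le> g j"
    and g1: "g 1 \<le> 1" and L: "1 \<le> L"
    and \<beta>: "0 < \<beta>" "real n * exp (-3 * \<beta>) \<le> 1/2" "n \<le> (1 + \<beta>) ^ L"
    and x: "u \<le> sqrt x"
  shows "emeasure (weight_space n) {w \<in> space (weight_space n). sqrt x \<le> ALG n g w}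
           \<le> ennreal (1536 * real n * (64 * real L / 3) ^ 4 * exp (- 3 * u / (64 * real L)) / x ^ 2)"
proof -
  have "3 < u" using \<beta>(1) L by (simp add: \<beta>_def zero_less_divide_iff)
  define \<beta>x where "\<beta>x = (sqrt x - 3) / (32 * real L)"
  have "\<beta> \<le> \<beta>x" using x L by (simp add: \<beta>_def \<beta>x_def divide_right_mono)
  have \<beta>x: "0 < \<beta>x" "real n * exp (-3 * \<beta>x) \<le> 1/2" "n \<le> (1 + \<beta>x) ^ L"
  proof -
    show "0 < \<beta>x" using \<beta>(1) \<open>\<beta> \<le> \<beta>x\<close> by linarith
    have "real n * exp (-3 * \<beta>x) \<le> real n * exp (-3 * \<beta>)"
      using \<open>\<beta> \<le> \<beta>x\<close> by (intro mult_left_mono) auto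
    then show "real n * exp (-3 * \<beta>x) \<le> 1/2" using \<beta>(2) by linarith
    have "(1 + \<beta>) ^ L \<le> (1 + \<beta>x) ^ L"
      using \<open>\<beta> \<le> \<beta>x\<close> \<beta>(1) by (intro power_mono) auto
    then show "n \<le> (1 + \<beta>x) ^ L" using \<beta>(3) by linarith
  qed
  have "g 1 + 1 + 32 * real L * \<beta>x < sqrt x" using g1 L by (simp add: \<beta>x_def)
  with n mono \<beta>x have "emeasure (weight_space n) {w \<in> space (weight_space n). sqrt x \<le> ALG n g w}
      \<le> ennreal (2 * real n * exp (-3 * \<beta>x))"
    by (rule emeasure_ALG_ge_le)
  also have "\<dots> \<le> ennreal (1536 * real n * (64 * real L / 3) ^ 4 * exp (- 3 * u / (64 * real L)) / x ^ 2)"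
    using exp_tail_le_inverse_square[OF L _ x, of n] \<open>3 < u\<close> by (simp add: \<beta>x_def ennreal_leI)
  finally show ?thesis .
qed

lemma tail_integral_ALG_le:
  fixes g :: "nat \<Rightarrow> real" and u :: real and L :: nat
  defines "\<beta> \<equiv> (u - 3) / (32 * real L)"
  assumes n: "1 \<le> n" and mono: "\<And>i j. 1 \<le> i \<Longrightarrow> i \<le> j \<Longrightarrow> j \<le> n \<Longrightarrow> g i \<le> g j"
    and g1: "0 < g 1" "g 1 \<le> 1 / u" and L: "1 \<le> L"
    and \<beta>: "0 < \<beta>" "real n * exp (-3 * \<beta>) \<le> 1/2" "n \<le> (1 + \<beta>) ^ L"
  shows "(\<integral>\<^sup>+ x. indicator {1 / (g 1)\<^sup>2..} x *
            emeasure (weight_space n) {w \<in> space (weight_space n). sqrt x \<le> ALG n g w} \<partial>lborel)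
         \<le> ennreal (1536 * real n * (64 * real L / 3) ^ 4 * exp (- 3 * u / (64 * real L)) / u ^ 2)"
proof -
  define K where "K = 1536 * real n * (64 * real L / 3) ^ 4 * exp (- 3 * u / (64 * real L))"
  have "3 < u" using \<beta>(1) L by (simp add: \<beta>_def zero_less_divide_iff)
  then have u0: "0 < u" and "1 / u \<le> 1" by simp_all
  with g1 have u: "u \<le> 1 / g 1" and "g 1 \<le> 1"
    by (simp add: le_divide_eq mult.commute, linarith)
  have "indicator {1 / (g 1)\<^sup>2..} x *
      emeasure (weight_space n) {w \<in> space (weight_space n). sqrt x \<le> ALG n g w}
    \<le> ennreal (K / x ^ 2) * indicator {u\<^sup>2..} x" for x
  proof (cases "1 / (g 1)\<^sup>2 \<le> x")
    case True
    have "u \<le> sqrt (1 / (g 1)\<^sup>2)" using u g1(1) by (simp add: real_sqrt_divide)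
    also have "\<dots> \<le> sqrt x" using True by simp
    finally have "u \<le> sqrt x" .
    have "0 < sqrt x" using \<open>u \<le> sqrt x\<close> u0 by linarith
    then have "0 < x" by simp
    have "u\<^sup>2 \<le> (sqrt x)\<^sup>2" using \<open>u \<le> sqrt x\<close> u0 by (intro power_mono) auto
    with \<open>0 < x\<close> have "u\<^sup>2 \<le> x" by simp
    with n mono \<open>g 1 \<le> 1\<close> L \<beta>[unfolded \<beta>_def] \<open>u \<le> sqrt x\<close>
    have "emeasure (weight_space n) {w \<in> space (weight_space n). sqrt x \<le> ALG n g w} \<le> ennreal (K / x ^ 2)"
      unfolding K_def by (intro emeasure_ALG_ge_sqrt_le)
    then show ?thesis using True \<open>u\<^sup>2 \<le> x\<close> by simp
  qed simp
  then have "(\<integral>\<^sup>+ x. indicator {1 / (g 1)\<^sup>2..} x *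
          emeasure (weight_space n) {w \<in> space (weight_space n). sqrt x \<le> ALG n g w} \<partial>lborel)
      \<le> (\<integral>\<^sup>+ x. ennreal (K / x ^ 2) * indicator {u\<^sup>2..} x \<partial>lborel)"
    by (intro nn_integral_mono)
  also have "\<dots> = ennreal (K * (1 / (real (2 - 1) * (u\<^sup>2) ^ (2 - 1))))"
  proof (rule nn_integral_has_integral_lebesgue')
    show "0 \<le> K / x ^ 2" for x by (simp add: K_def)
    show "((\<lambda>x. K / x ^ 2) has_integral K * (1 / (real (2 - 1) * (u\<^sup>2) ^ (2 - 1)))) {u\<^sup>2..}"
      using has_integral_mult_right[OF has_integral_inverse_power_to_inf[of 2 "u\<^sup>2"], of K] u0 by simp
  qed
  finally show ?thesis by (simp add: K_def)
qed

section \<open>Choice of the parameters\<close>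

lemma eventually_ln_estimates:
  "\<forall>\<^sub>F x in at_top. 1 < ln x \<and>
     x * exp (-3 * ((ln x)\<^sup>2 - 3) / (32 * (2 * ln x / ln (ln x) + 1))) \<le> 1/2 \<and>
     sqrt (ln x) \<le> ((ln x)\<^sup>2 - 3) / (32 * (2 * ln x / ln (ln x) + 1)) \<and>
     1536 * x\<^sup>2 * (64 * (2 * ln x / ln (ln x) + 1) / 3) ^ 4
       * exp (- 3 * (ln x)\<^sup>2 / (64 * (2 * ln x / ln (ln x) + 1))) / ((ln x)\<^sup>2)\<^sup>2 \<le> (1::real)"
  by (intro eventually_conj) real_asymp+

lemma eventually_expansion_parameters:
  "\<forall>\<^sub>F n in sequentially.
     let l = ln (real n); L = nat \<lceil>2 * l / ln l\<rceil>; \<beta> = (l\<^sup>2 - 3) / (32 * real L) in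
       1 \<le> L \<and> 0 < \<beta> \<and> real n * exp (-3 * \<beta>) \<le> 1/2 \<and> n \<le> (1 + \<beta>) ^ L \<and>
       1536 * real n * (64 * real L / 3) ^ 4 * exp (- 3 * l\<^sup>2 / (64 * real L)) / (l\<^sup>2)\<^sup>2 \<le> 1 / n"
  using eventually_compose_filterlim[OF eventually_ln_estimates filterlim_real_sequentially]
    eventually_gt_at_top[of 0]
proof eventually_elim
  case (elim n)
  define l where "l = ln (real n)"
  define Lr where "Lr = 2 * l / ln l"
  define L where "L = nat \<lceil>Lr\<rceil>"
  define \<beta> where "\<beta> = (l\<^sup>2 - 3) / (32 * real L)"
  define \<beta>' where "\<beta>' = (l\<^sup>2 - 3) / (32 * (Lr + 1))"
  have l: "1 < l" and small: "real n * exp (-3 * \<beta>') \<le> 1/2" and sqrt_l: "sqrt l \<le> \<beta>'"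
    and bound: "1536 * (real n)\<^sup>2 * (64 * (Lr + 1) / 3) ^ 4 * exp (- 3 * l\<^sup>2 / (64 * (Lr + 1))) / (l\<^sup>2)\<^sup>2 \<le> 1"
    using elim by (simp_all add: l_def Lr_def \<beta>'_def)
  have Lr: "0 < Lr" using l by (simp add: Lr_def)
  have L: "Lr \<le> L" "L \<le> Lr + 1" "1 \<le> L" using Lr by (simp_all add: L_def) linarith+
  have "0 < \<beta>'" using sqrt_l l by (smt (verit) real_sqrt_gt_zero)
  then have "0 < l\<^sup>2 - 3" using Lr by (simp add: \<beta>'_def zero_less_divide_iff)
  then have \<beta>: "\<beta>' \<le> \<beta>" using L Lr by (simp add: \<beta>_def \<beta>'_def frac_le)
  have "real n * exp (-3 * \<beta>) \<le> real n * exp (-3 * \<beta>')"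
    using \<beta> by (intro mult_left_mono) auto
  with small have small_\<beta>: "real n * exp (-3 * \<beta>) \<le> 1/2" by linarith
  have "exp l \<le> (1 + \<beta>) ^ L"
    using l L sqrt_l \<beta> by (intro exp_le_power_of_sqrt) (auto simp: Lr_def)
  then have n_le: "n \<le> (1 + \<beta>) ^ L" using elim(2) by (simp add: l_def)
  have "1536 * real n * (64 * real L / 3) ^ 4 * exp (- 3 * l\<^sup>2 / (64 * real L)) / (l\<^sup>2)\<^sup>2 \<le> 1 / n"
  proof -
    have "exp (- 3 * l\<^sup>2 / (64 * real L)) \<le> exp (- 3 * l\<^sup>2 / (64 * (Lr + 1)))"
      using L Lr by (simp add: frac_le)
    then have "1536 * real n * (64 * real L / 3) ^ 4 * exp (- 3 * l\<^sup>2 / (64 * real L)) / (l\<^sup>2)\<^sup>2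
        \<le> 1536 * real n * (64 * (Lr + 1) / 3) ^ 4 * exp (- 3 * l\<^sup>2 / (64 * (Lr + 1))) / (l\<^sup>2)\<^sup>2"
      using L by (intro divide_right_mono mult_mono power_mono) auto
    also have "\<dots> = (1536 * (real n)\<^sup>2 * (64 * (Lr + 1) / 3) ^ 4 * exp (- 3 * l\<^sup>2 / (64 * (Lr + 1))) / (l\<^sup>2)\<^sup>2) / n"
      using elim(2) by (simp add: power2_eq_square)
    also have "\<dots> \<le> 1 / n" using bound by (intro divide_right_mono) auto
    finally show ?thesis .
  qed
  then show ?case
    unfolding Let_def l_def[symmetric] Lr_def[symmetric] L_def[symmetric] \<beta>_def[symmetric]
    using L \<open>0 < \<beta>'\<close> \<beta> small_\<beta> n_le by auto
qed

theorem lemma7: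
  fixes f :: "nat \<Rightarrow> nat \<Rightarrow> real" and q :: real
  assumes pos: "\<And>n i. 1 \<le> i \<Longrightarrow> i \<le> n \<Longrightarrow> 0 < f n i"
    and mono: "\<And>n i j. 1 \<le> i \<Longrightarrow> i \<le> j \<Longrightarrow> j \<le> n \<Longrightarrow> f n i \<le> f n j"
    and ratio: "\<And>n. 1 \<le> n \<Longrightarrow> f n n / f n 1 \<le> real n powr q"
    and small: "\<forall>\<^sub>F n in sequentially. f n 1 \<le> 1 / (ln (real n))\<^sup>2"
  shows "\<exists>C. \<forall>\<^sub>F n in sequentially.
     (\<integral>\<^sup>+ x. indicator {1 / (f n 1)\<^sup>2..} x *
          emeasure (weight_space n) {w \<in> space (weight_space n). sqrt x \<le> ALG n (f n) w} \<partial>lborel)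
       \<le> ennreal (C / real n)"
proof (intro exI[of _ 1])
  show "\<forall>\<^sub>F n in sequentially.
     (\<integral>\<^sup>+ x. indicator {1 / (f n 1)\<^sup>2..} x *
          emeasure (weight_space n) {w \<in> space (weight_space n). sqrt x \<le> ALG n (f n) w} \<partial>lborel)
       \<le> ennreal (1 / real n)"
    using eventually_expansion_parameters small eventually_ge_at_top[of 1]
  proof eventually_elim
    case (elim n)
    define l where "l = ln (real n)"
    define L where "L = nat \<lceil>2 * l / ln l\<rceil>"
    note par = elim(1)[unfolded Let_def, folded l_def, folded L_def]
    have "0 < f n 1" "f n 1 \<le> 1 / l\<^sup>2" using pos elim(2,3) by (simp_all add: l_def)
    with elim(3) mono par have "(\<integral>\<^sup>+ x. indicator {1 / (f n 1)\<^sup>2..} x *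
          emeasure (weight_space n) {w \<in> space (weight_space n). sqrt x \<le> ALG n (f n) w} \<partial>lborel)
        \<le> ennreal (1536 * real n * (64 * real L / 3) ^ 4 * exp (- 3 * l\<^sup>2 / (64 * real L)) / (l\<^sup>2)\<^sup>2)"
      by (intro tail_integral_ALG_le) blast+
    also have "\<dots> \<le> ennreal (1 / n)"
      using par by (intro ennreal_leI) blast
    finally show ?case .
  qed
qed

end
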